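(* Let $n\ge 2$ and let $\mathcal D^{hyp}$ be the labeled Rauzy diagram of the labeled permutation $$\tau_n=\begin{pmatrix}0&2&3&\cdots&n-1&n\\ n&n-1&\cdots&3&2&0\end{pmatrix}$$ on the alphabet $\{0,2,3,\dots,n\}$. Let $\gamma$ be a closed oriented path in $\mathcal D^{hyp}$. If $\gamma$ contains an edge $\pi\xrightarrow{\alpha,\beta}\pi'$ with $\pi\neq\pi'$, then there is a letter $\beta'$ such that $\gamma$ also contains an edge $\pi'\xrightarrow{\alpha,\beta'}\pi''$ (starting at $\pi'$ with the same winner $\alpha$).
   Context: A labeled permutation on an alphabet $\mathcal A$ with $d$ letters is a pair $(\pi_t,\pi_b)$ of bijections $\mathcal A\to\{1,\dots,d\}$, written as a two-row array whose top (bottom) row lists $\pi_t^{-1}(1),\dots,\pi_t^{-1}(d)$ ($\pi_b^{-1}(1),\dots,\pi_b^{-1}(d)$). The Rauzy move $\mathcal R_t$ keeps the top row and, in the bottom row, moves the last letter $\pi_b^{-1}(d)$ to the position immediately to the right of the letter $\pi_t^{-1}(d)$; its winner is $\pi_t^{-1}(d)$, its loser $\pi_b^{-1}(d)$. The move $\mathcal R_b$ is symmetric (keeps the bottom row, moves $\pi_t^{-1}(d)$ in the top row to immediately right of $\pi_b^{-1}(d)$); winner $\pi_b^{-1}(d)$, loser $\pi_t^{-1}(d)$. The labeled Rauzy diagram of $\pi$ is the directed graph of all labeled permutations reachable from $\pi$ by Rauzy moves, with edges $\pi\xrightarrow{\alpha,\beta}\pi'$ for moves with winner $\alpha$ and loser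 $\beta$. *)

theory Defs
  imports Main
begin

text \<open>A labeled permutation is represented by its two-row array:
  a pair (top row, bottom row) of lists of letters, where each row lists
  every letter of the alphabet exactly once.\<close>

type_synonym 'a lperm = "'a list \<times> 'a list"

definition insert_after :: "'a \<Rightarrow> 'a \<Rightarrow> 'a list \<Rightarrow> 'a list" where
  "insert_after a b xs = takeWhile (\<lambda>x. x \<noteq> a) xs @ take 1 (dropWhile (\<lambda>x. x \<noteq> a) xs)
                         @ [b] @ drop 1 (dropWhile (\<lambda>x. x \<noteq> a) xs)"

definition rauzy_t :: "'a lperm \<Rightarrow> 'a lperm" where
  "rauzy_t p = (let (t, b) = p in (t, insert_after (last t) (last b) (butlast b)))"

definition rauzy_b :: "'a lperm \<Rightarrow> 'a lperm" where
  "rauzy_b p = (let (t, b) = p in (insert_after (last b) (last t) (butlast t), b))"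

text \<open>Labeled edges (pi, winner, loser, pi') produced by Rauzy moves.\<close>
definition rauzy_edge :: "'a lperm \<Rightarrow> 'a \<Rightarrow> 'a \<Rightarrow> 'a lperm \<Rightarrow> bool" where
  "rauzy_edge p \<alpha> \<beta> q \<longleftrightarrow>
     (q = rauzy_t p \<and> \<alpha> = last (fst p) \<and> \<beta> = last (snd p)) \<or>
     (q = rauzy_b p \<and> \<alpha> = last (snd p) \<and> \<beta> = last (fst p))"

definition rauzy_vertices :: "'a lperm \<Rightarrow> 'a lperm set" where
  "rauzy_vertices p0 = {q. (\<lambda>x y. y = rauzy_t x \<or> y = rauzy_b x)\<^sup>*\<^sup>* p0 q}"

definition rauzy_diagram_edges :: "'a lperm \<Rightarrow> ('a lperm \<times> 'a \<times> 'a \<times> 'a lperm) set" where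
  "rauzy_diagram_edges p0 =
     {(p, \<alpha>, \<beta>, q). p \<in> rauzy_vertices p0 \<and> rauzy_edge p \<alpha> \<beta> q}"

definition closed_path :: "'a lperm \<Rightarrow> ('a lperm \<times> 'a \<times> 'a \<times> 'a lperm) list \<Rightarrow> bool" where
  "closed_path p0 \<gamma> \<longleftrightarrow>
     \<gamma> \<noteq> [] \<and> set \<gamma> \<subseteq> rauzy_diagram_edges p0 \<and>
     (\<forall>i. Suc i < length \<gamma> \<longrightarrow> snd (snd (snd (\<gamma> ! i))) = fst (\<gamma> ! Suc i)) \<and>
     snd (snd (snd (last \<gamma>))) = fst (hd \<gamma>)"

definition tau :: "nat \<Rightarrow> nat lperm" where
  "tau n = (0 # [2..<n+1], rev (0 # [2..<n+1]))"

end

theory Submission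
  imports Defs
begin

(* Fix a word m of distinct letters (for the theorem m = 0 # [2..<n+1], so that
   tau n = tau_word m).  The labeled Rauzy class of tau(m) is described recursively: a vertex
   is tau(m), or it is obtained from a vertex of the class on a shorter subword by the
   extension ext_top (top type), or it is the mirror image of such a vertex (bottom type).
   Rauzy moves commute with extensions except at tau, which gives closure of the class,
   existence of predecessors and injectivity of both moves (hyp_class_rauzy_closed).
   The key fact is that every non-loop edge p -> R p is a trap: some vertex set contains
   R p but not p, and a walk can leave it only through the R-edge out of R p
   (hyp_class_traps).  It is proved by induction on the recursive description, carrying an
   embedding of the smaller class into the whole diagram; the two base cases are the moves
   that enter the block of an extension (trap_at_exit) and the moves into tau (trap_at_entry),
   and R_b-edges are reduced to R_t-edges by exchanging the rows.  A closed path entering a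
   trap must leave it, so it uses the R-edge out of pi' = R pi, whose winner equals that of
   pi since R_t keeps the top row and R_b the bottom row. *)

lemma insert_after_Cons [simp]:
  "insert_after a c (x # xs) = (if x = a then x # c # xs else x # insert_after a c xs)"
  by (simp add: insert_after_def)

lemma insert_after_append: "a \<notin> set xs \<Longrightarrow> insert_after a c (xs @ ys) = xs @ insert_after a c ys"
  by (induction xs) auto

(* Inserting after an occurring letter is injective in the list and in the inserted letter;
   this is what makes the Rauzy moves invertible. *)
lemma insert_after_inj:
  "a \<in> set xs \<Longrightarrow> a \<in> set ys \<Longrightarrow> insert_after a c xs = insert_after a d ys \<Longrightarrow> xs = ys \<and> c = d"
proof (induction xs arbitrary: ys)
  case (Cons x xs)
  then show ?case by (cases ys) (auto split: if_splits)
qed simp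

lemma rauzy_t_pair: "rauzy_t (t, b) = (t, insert_after (last t) (last b) (butlast b))"
  by (simp add: rauzy_t_def)

lemma rauzy_b_pair: "rauzy_b (t, b) = (insert_after (last b) (last t) (butlast t), b)"
  by (simp add: rauzy_b_def)

lemma swap_eq_swap_iff [simp]: "prod.swap p = prod.swap q \<longleftrightarrow> p = q"
  using inj_eq[OF inj_swap] .

lemma rauzy_t_swap: "rauzy_t (prod.swap p) = prod.swap (rauzy_b p)"
  by (cases p) (simp add: rauzy_t_pair rauzy_b_pair)

lemma rauzy_b_swap: "rauzy_b (prod.swap p) = prod.swap (rauzy_t p)"
  by (cases p) (simp add: rauzy_t_pair rauzy_b_pair)

(* R_t keeps the top row and R_b the bottom row; hence the winner of the R_t-move at
   R_t p equals the winner at p, and likewise for R_b. *)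
lemma fst_rauzy_t: "fst (rauzy_t p) = fst p"
  by (cases p) (simp add: rauzy_t_pair)

lemma snd_rauzy_b: "snd (rauzy_b p) = snd p"
  by (cases p) (simp add: rauzy_b_pair)

lemma inj_on_rauzy_t: "inj_on rauzy_t {p. last (fst p) \<in> set (butlast (snd p))}"
proof (rule inj_onI)
  fix p q :: "'a lperm"
  assume "p \<in> {p. last (fst p) \<in> set (butlast (snd p))}" "q \<in> {p. last (fst p) \<in> set (butlast (snd p))}"
    and eq: "rauzy_t p = rauzy_t q"
  moreover obtain t b t' b' where pq: "p = (t, b)" "q = (t', b')" by fastforce
  ultimately have t: "t' = t" and mem: "last t \<in> set (butlast b)" "last t \<in> set (butlast b')"
    and moved: "insert_after (last t) (last b) (butlast b) = insert_after (last t) (last b') (butlast b')"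
    by (auto simp: rauzy_t_pair)
  have "butlast b = butlast b' \<and> last b = last b'" using mem moved by (rule insert_after_inj)
  moreover have "b \<noteq> []" "b' \<noteq> []" using mem by auto
  ultimately show "p = q" using pq t by (metis append_butlast_last_id)
qed

lemma inj_on_rauzy_b: "inj_on rauzy_b {p. last (snd p) \<in> set (butlast (fst p))}"
proof (rule inj_onI)
  fix p q :: "'a lperm"
  assume "p \<in> {p. last (snd p) \<in> set (butlast (fst p))}" "q \<in> {p. last (snd p) \<in> set (butlast (fst p))}"
    and "rauzy_b p = rauzy_b q"
  then have "prod.swap p \<in> {p. last (fst p) \<in> set (butlast (snd p))}"
    "prod.swap q \<in> {p. last (fst p) \<in> set (butlast (snd p))}"
    "rauzy_t (prod.swap p) = rauzy_t (prod.swap q)"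
    by (auto simp: rauzy_t_swap)
  then have "prod.swap p = prod.swap q" using inj_onD[OF inj_on_rauzy_t] by blast
  then show "p = q" by simp
qed

definition tau_word :: "'a list \<Rightarrow> 'a lperm" where
  "tau_word m = (m, rev m)"

(* Every vertex of the hyperelliptic class other
   than tau arises in this way from a vertex of the class on a shorter word. *)
definition ext_top :: "'a list \<Rightarrow> 'a lperm \<Rightarrow> 'a lperm" where
  "ext_top F p = (F @ fst p, hd (snd p) # rev F @ tl (snd p))"

lemma swap_tau_word [simp]: "prod.swap (tau_word m) = tau_word (rev m)"
  by (simp add: tau_word_def)

lemma swap_eq_tau_word [simp]: "prod.swap p = tau_word m \<longleftrightarrow> p = tau_word (rev m)"
  by (cases p) (auto simp: tau_word_def)

lemma ext_top_Nil: "snd p \<noteq> [] \<Longrightarrow> ext_top [] p = p"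
  by (cases p) (simp add: ext_top_def)

lemma ext_top_tau_singleton: "ext_top G (tau_word [l]) = tau_word (G @ [l])"
  by (simp add: ext_top_def tau_word_def)

lemma ext_top_inj: "snd p \<noteq> [] \<Longrightarrow> snd q \<noteq> [] \<Longrightarrow> ext_top F p = ext_top F q \<Longrightarrow> p = q"
  by (cases p; cases q) (auto simp: ext_top_def list.expand)

lemma rauzy_t_ext_tau:
  "m \<noteq> [] \<Longrightarrow> rauzy_t (ext_top F (tau_word (h # m))) = ext_top (F @ [h]) (tau_word m)"
  by (cases m rule: rev_cases) (simp_all add: ext_top_def tau_word_def butlast_append rauzy_t_pair)

lemma rauzy_t_ext_top:
  "t \<noteq> [] \<Longrightarrow> bs \<noteq> [] \<Longrightarrow> last t \<noteq> h \<Longrightarrow> last t \<notin> set F \<Longrightarrow>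
   rauzy_t (ext_top F (t, h # bs)) = ext_top F (rauzy_t (t, h # bs))"
  by (simp add: ext_top_def butlast_append insert_after_append rauzy_t_pair)

lemma rauzy_b_ext_top:
  "t \<noteq> [] \<Longrightarrow> bs \<noteq> [] \<Longrightarrow> last bs \<notin> set F \<Longrightarrow>
   rauzy_b (ext_top F (t, h # bs)) = ext_top F (rauzy_b (t, h # bs))"
  by (simp add: ext_top_def butlast_append insert_after_append rauzy_b_pair)

(* An extension of tau(h # m) with |m| >= 2 is not an extension by the longer block F @ [h]:
   the second letter of the bottom rows differ. *)
lemma ext_tau_not_ext:
  assumes "distinct (F @ h # m)" and "2 \<le> length m"
  shows "ext_top F (tau_word (h # m)) \<noteq> ext_top (F @ [h]) y"
proof
  assume eq: "ext_top F (tau_word (h # m)) = ext_top (F @ [h]) y"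
  obtain m' l where m: "m = m' @ [l]" and "m' \<noteq> []"
    using assms(2) by (cases m rule: rev_cases) fastforce+
  have "tl (snd (ext_top F (tau_word (h # m)))) = tl (snd (ext_top (F @ [h]) y))"
    using eq by simp
  then have bottom: "(rev F @ rev m') @ [h] = h # rev F @ tl (snd y)"
    using m by (simp add: ext_top_def tau_word_def)
  have "hd (rev F @ rev m') = hd ((rev F @ rev m') @ [h])"
    using \<open>m' \<noteq> []\<close> by (intro hd_append2[symmetric]) simp
  also have "\<dots> = h" by (simp only: bottom list.sel(1))
  finally have "hd (rev F @ rev m') = h" .
  moreover have "hd (rev F @ rev m') \<in> set F \<union> set m'"
    using \<open>m' \<noteq> []\<close> hd_in_set[of "rev F @ rev m'"] by auto
  ultimately show False using assms(1) m by auto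
qed

(* Bottom type (hyp_b) is top type of the mirror image, so a single
   inductive predicate describes both; R_t-orbits stay inside the top type and
   R_b-orbits inside the bottom type, except at tau. *)
inductive hyp_t :: "'a list \<Rightarrow> 'a lperm \<Rightarrow> bool" where
  tau: "2 \<le> length m \<Longrightarrow> hyp_t m (tau_word m)"
| ext: "hyp_t (rev m) (prod.swap p) \<Longrightarrow> F \<noteq> [] \<Longrightarrow> hyp_t (F @ m) (ext_top F p)"

abbreviation hyp_b :: "'a list \<Rightarrow> 'a lperm \<Rightarrow> bool" where
  "hyp_b m p \<equiv> hyp_t (rev m) (prod.swap p)"

lemma hyp_t_length: "hyp_t m p \<Longrightarrow> 2 \<le> length m"
  by (induction rule: hyp_t.induct) auto

lemma hyp_b_tau: "2 \<le> length m \<Longrightarrow> hyp_b m (tau_word m)"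
  by (simp add: hyp_t.tau)

lemma hyp_t_ext_tau:
  assumes "2 \<le> length (G @ m)" and "m \<noteq> []"
  shows "hyp_t (G @ m) (ext_top G (tau_word m))"
proof (cases "G = []")
  case True
  then show ?thesis using assms hyp_t.tau[of m] by (simp add: ext_top_Nil tau_word_def)
next
  case False
  show ?thesis
  proof (cases "2 \<le> length m")
    case True
    show ?thesis by (rule hyp_t.ext[OF hyp_b_tau[OF True] \<open>G \<noteq> []\<close>])
  next
    case False
    then obtain l where "m = [l]" using assms(2) by (cases m) (auto simp: Suc_le_eq)
    then show ?thesis using assms(1) by (simp add: ext_top_tau_singleton hyp_t.tau)
  qed
qed

definition well_shaped :: "'a list \<Rightarrow> 'a lperm \<Rightarrow> bool" where
  "well_shaped m p \<longleftrightarrow> 2 \<le> length m \<and>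
     distinct (fst p) \<and> set (fst p) = set m \<and> length (fst p) = length m \<and>
     distinct (snd p) \<and> set (snd p) = set m \<and> length (snd p) = length m \<and>
     hd (fst p) = hd m \<and> hd (snd p) = last m \<and> last (fst p) \<noteq> last (snd p)"

lemma well_shaped_swap: "well_shaped (rev m) (prod.swap p) \<longleftrightarrow> well_shaped m p"
  by (cases "m = []") (auto simp: well_shaped_def hd_rev last_rev)

(* Every top-type vertex is well shaped, and tau is the only one whose last bottom letter
   is its first top letter (the position where R_b leaves the top type). *)
lemma hyp_t_shape:
  "hyp_t m p \<Longrightarrow> distinct m \<Longrightarrow>
   well_shaped m p \<and> (p = tau_word m \<longleftrightarrow> last (snd p) = hd (fst p))"
proof (induction rule: hyp_t.induct)
  case (tau m)
  then show ?case
    by (cases m) (auto simp: well_shaped_def tau_word_def hd_rev last_rev distinct_length_2_or_more)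
next
  case (ext m p F)
  obtain t b where p: "p = (t, b)" by fastforce
  have shaped: "well_shaped m (t, b)"
    using ext p well_shaped_swap[of m p] by simp
  then have "2 \<le> length b" "t \<noteq> []" by (auto simp: well_shaped_def)
  then obtain h bs where b: "b = h # bs" and "bs \<noteq> []"
    by (cases b) (auto simp: Suc_le_eq)
  then have "last bs \<in> set m" using shaped by (auto simp: well_shaped_def)
  moreover have "set F \<inter> set m = {}" "distinct F" "F \<noteq> []" using ext by auto
  ultimately have last_ne_hd: "last (snd (ext_top F p)) \<noteq> hd (fst (ext_top F p))"
    using p b \<open>bs \<noteq> []\<close> by (cases F) (auto simp: ext_top_def)
  have "well_shaped (F @ m) (ext_top F p)"
    using shaped p b \<open>bs \<noteq> []\<close> \<open>t \<noteq> []\<close> \<open>set F \<inter> set m = {}\<close> \<open>distinct F\<close> \<open>F \<noteq> []\<close>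
    unfolding well_shaped_def ext_top_def by (auto simp: last_append hd_append)
  moreover have "ext_top F p \<noteq> tau_word (F @ m)"
    using last_ne_hd \<open>F \<noteq> []\<close> by (cases F) (auto simp: tau_word_def last_rev)
  ultimately show ?case using last_ne_hd by simp
qed

lemma hyp_b_shape:
  "hyp_b m p \<Longrightarrow> distinct m \<Longrightarrow>
   well_shaped m p \<and> (p = tau_word m \<longleftrightarrow> last (fst p) = hd (snd p))"
  using hyp_t_shape[of "rev m" "prod.swap p"] well_shaped_swap[of m p]
  by (cases p) (auto simp: tau_word_def)

lemma well_shaped_cases:
  assumes "well_shaped m p"
  obtains t h bs where "p = (t, h # bs)" "t \<noteq> []" "bs \<noteq> []" "last t \<in> set m" "last bs \<in> set m"
proof -
  obtain t b where p: "p = (t, b)" by fastforce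
  have rows: "2 \<le> length b" "t \<noteq> []" "set t = set m" "set b = set m"
    using assms p by (auto simp: well_shaped_def)
  then obtain h bs where b: "b = h # bs" "bs \<noteq> []" by (cases b) (auto simp: Suc_le_eq)
  have "last t \<in> set m" "last bs \<in> set m"
    using rows b last_in_set[OF \<open>t \<noteq> []\<close>] last_in_set[OF \<open>bs \<noteq> []\<close>] by auto
  then show thesis using that p b \<open>t \<noteq> []\<close> by blast
qed

lemma well_shaped_last_in_butlast:
  assumes "well_shaped m p"
  shows "last (fst p) \<in> set (butlast (snd p))" and "last (snd p) \<in> set (butlast (fst p))"
proof -
  have in_butlast: "x \<in> set (butlast xs)" if "x \<in> set xs" "x \<noteq> last xs" for x :: 'a and xs
    using that by (induction xs) auto
  have ne: "fst p \<noteq> []" "snd p \<noteq> []" and "last (fst p) \<noteq> last (snd p)"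
    and "set (fst p) = set (snd p)"
    using assms by (auto simp: well_shaped_def)
  then have "last (fst p) \<in> set (snd p)" "last (snd p) \<in> set (fst p)"
    using last_in_set[OF ne(1)] last_in_set[OF ne(2)] by auto
  then show "last (fst p) \<in> set (butlast (snd p))" "last (snd p) \<in> set (butlast (fst p))"
    using in_butlast \<open>last (fst p) \<noteq> last (snd p)\<close> by auto
qed

lemma rauzy_b_ext_vertex:
  assumes "hyp_b m p" and "distinct (F @ m)"
  shows "rauzy_b (ext_top F p) = ext_top F (rauzy_b p)"
proof -
  have "well_shaped m p" using hyp_b_shape[OF assms(1)] assms(2) by simp
  then obtain t h bs where p: "p = (t, h # bs)" "t \<noteq> []" "bs \<noteq> []" "last bs \<in> set m"
    by (rule well_shaped_cases)
  moreover have "last bs \<notin> set F" using p(4) assms(2) by auto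
  ultimately show ?thesis unfolding p(1) by (intro rauzy_b_ext_top)
qed

lemma rauzy_t_ext_vertex:
  assumes "hyp_b m p" and "distinct (F @ m)" and "p \<noteq> tau_word m"
  shows "rauzy_t (ext_top F p) = ext_top F (rauzy_t p)"
proof -
  have shaped: "well_shaped m p" and "last (fst p) \<noteq> hd (snd p)"
    using hyp_b_shape[OF assms(1)] assms(2,3) by simp_all
  obtain t h bs where p: "p = (t, h # bs)" "t \<noteq> []" "bs \<noteq> []" "last t \<in> set m"
    using shaped by (rule well_shaped_cases)
  moreover have "last t \<notin> set F" "last t \<noteq> h"
    using p assms(2) \<open>last (fst p) \<noteq> hd (snd p)\<close> by auto
  ultimately show ?thesis unfolding p(1) by (intro rauzy_t_ext_top)
qed

lemma ext_top_ne_tau: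
  assumes "hyp_b m p" and "distinct (F @ m)" and "F \<noteq> []"
  shows "ext_top F p \<noteq> tau_word (F @ m)"
proof -
  have "well_shaped m p" using hyp_b_shape[OF assms(1)] assms(2) by simp
  then obtain t h bs where p: "p = (t, h # bs)" "bs \<noteq> []" "last bs \<in> set m"
    by (rule well_shaped_cases)
  have "last (snd (ext_top F p)) = last bs" using p by (simp add: ext_top_def)
  moreover have "last (snd (tau_word (F @ m))) = hd F" using \<open>F \<noteq> []\<close>
    by (simp add: tau_word_def last_rev)
  ultimately show ?thesis using p assms(2,3) by (cases F) auto
qed

lemma rauzy_t_tau: "m \<noteq> [] \<Longrightarrow> rauzy_t (tau_word (h # m)) = ext_top [h] (tau_word m)"
  using rauzy_t_ext_tau[of m "[]" h] by (simp add: ext_top_Nil tau_word_def)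

lemma hyp_t_closed:
  "hyp_t m p \<Longrightarrow> distinct m \<Longrightarrow> hyp_t m (rauzy_t p) \<and> (p \<noteq> tau_word m \<longrightarrow> hyp_t m (rauzy_b p))"
proof (induction rule: hyp_t.induct)
  case (tau m)
  then obtain h m' where "m = h # m'" "m' \<noteq> []" by (cases m) (auto simp: Suc_le_eq)
  then show ?case using tau hyp_t_ext_tau[of "[h]" m'] by (simp add: rauzy_t_tau)
next
  case (ext m p F)
  have IH: "hyp_b m (rauzy_b p)" "p \<noteq> tau_word m \<Longrightarrow> hyp_b m (rauzy_t p)"
    using ext.IH ext.prems by (auto simp: rauzy_t_swap rauzy_b_swap)
  have "hyp_t (F @ m) (rauzy_t (ext_top F p))"
  proof (cases "p = tau_word m")
    case True
    obtain h m' where "m = h # m'" "m' \<noteq> []"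
      using hyp_t_length[OF ext.hyps(1)] by (cases m) (auto simp: Suc_le_eq)
    moreover have "2 \<le> length ((F @ [h]) @ m')" using \<open>m' \<noteq> []\<close> by (cases m') auto
    ultimately show ?thesis
      using True hyp_t_ext_tau[of "F @ [h]" m'] by (simp add: rauzy_t_ext_tau)
  next
    case False
    then show ?thesis
      using rauzy_t_ext_vertex[OF ext.hyps(1) ext.prems False] hyp_t.ext[OF IH(2)[OF False] ext.hyps(2)]
      by simp
  qed
  moreover have "hyp_t (F @ m) (rauzy_b (ext_top F p))"
    using rauzy_b_ext_vertex[OF ext.hyps(1) ext.prems] hyp_t.ext[OF IH(1) ext.hyps(2)] by simp
  ultimately show ?case by simp
qed

lemma hyp_b_closed:
  "hyp_b m p \<Longrightarrow> distinct m \<Longrightarrow> hyp_b m (rauzy_b p) \<and> (p \<noteq> tau_word m \<longrightarrow> hyp_b m (rauzy_t p))"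
  using hyp_t_closed[of "rev m" "prod.swap p"] by (simp add: rauzy_t_swap rauzy_b_swap)

lemma hyp_t_preds:
  "hyp_t m p \<Longrightarrow> distinct m \<Longrightarrow> (\<exists>z. hyp_t m z \<and> rauzy_t z = p) \<and>
     (p \<noteq> tau_word m \<longrightarrow> (\<exists>z. hyp_t m z \<and> z \<noteq> tau_word m \<and> rauzy_b z = p))"
proof (induction rule: hyp_t.induct)
  case (tau m)
  obtain G a c where m: "m = G @ [a, c]"
    using tau.hyps by (cases m rule: rev_cases; cases "butlast m" rule: rev_cases) auto
  have "rauzy_t (ext_top G (tau_word [a, c])) = tau_word m"
    using m by (simp add: rauzy_t_ext_tau ext_top_tau_singleton)
  moreover have "hyp_t m (ext_top G (tau_word [a, c]))" using hyp_t_ext_tau[of G "[a, c]"] m by simp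
  ultimately show ?case by blast
next
  case (ext m p F)
  have d: "distinct (F @ m)" by fact
  have pred_t: "\<exists>z. hyp_t (F @ m) z \<and> rauzy_t z = ext_top F p"
  proof (cases "p = tau_word m")
    case True
    obtain G f where F: "F = G @ [f]" using \<open>F \<noteq> []\<close> by (cases F rule: rev_cases) auto
    have "m \<noteq> []" "2 \<le> length (G @ f # m)" using hyp_t_length[OF ext.hyps(1)] by auto
    then have "rauzy_t (ext_top G (tau_word (f # m))) = ext_top F p"
      using True F by (simp add: rauzy_t_ext_tau)
    moreover have "hyp_t (F @ m) (ext_top G (tau_word (f # m)))"
      using hyp_t_ext_tau[of G "f # m"] \<open>2 \<le> length (G @ f # m)\<close> F by simp
    ultimately show ?thesis by blast
  next
    case False
    then obtain z where z: "hyp_t (rev m) z" "z \<noteq> tau_word (rev m)" "rauzy_b z = prod.swap p"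
      using ext.IH ext.prems by auto
    then have z': "hyp_b m (prod.swap z)" "prod.swap z \<noteq> tau_word m" "rauzy_t (prod.swap z) = p"
      by (auto simp: rauzy_t_swap)
    then have "rauzy_t (ext_top F (prod.swap z)) = ext_top F p"
      using rauzy_t_ext_vertex[OF z'(1) d z'(2)] by simp
    moreover have "hyp_t (F @ m) (ext_top F (prod.swap z))" using z'(1) \<open>F \<noteq> []\<close> by (rule hyp_t.ext)
    ultimately show ?thesis by blast
  qed
  obtain z where "hyp_t (rev m) z" "rauzy_t z = prod.swap p" using ext.IH ext.prems by auto
  then have z: "hyp_b m (prod.swap z)" "rauzy_b (prod.swap z) = p" by (auto simp: rauzy_b_swap)
  then have "rauzy_b (ext_top F (prod.swap z)) = ext_top F p"
    using rauzy_b_ext_vertex[OF z(1) d] by simp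
  moreover have "hyp_t (F @ m) (ext_top F (prod.swap z))" using z(1) \<open>F \<noteq> []\<close> by (rule hyp_t.ext)
  moreover have "ext_top F (prod.swap z) \<noteq> tau_word (F @ m)"
    using ext_top_ne_tau[OF z(1) d \<open>F \<noteq> []\<close>] .
  ultimately show ?case using pred_t by blast
qed

definition hyp_class :: "'a list \<Rightarrow> 'a lperm set" where
  "hyp_class m = {p. hyp_t m p \<or> hyp_b m p}"

definition rauzy_closed :: "'a lperm set \<Rightarrow> bool" where
  "rauzy_closed V \<longleftrightarrow> (\<forall>p\<in>V. rauzy_t p \<in> V \<and> rauzy_b p \<in> V) \<and> inj_on rauzy_t V \<and> inj_on rauzy_b V"

lemma inj_on_swap_image:
  "inj_on f V \<Longrightarrow> (\<And>p. g (prod.swap p) = prod.swap (f p)) \<Longrightarrow> inj_on g (prod.swap ` V)"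
  by (auto simp: inj_on_def)

lemma rauzy_closed_swap:
  assumes "rauzy_closed V"
  shows "rauzy_closed (prod.swap ` V)"
proof -
  have "rauzy_t q \<in> prod.swap ` V \<and> rauzy_b q \<in> prod.swap ` V" if q: "q \<in> prod.swap ` V" for q
  proof -
    obtain p where "p \<in> V" "q = prod.swap p" using q by blast
    then show ?thesis
      using assms by (simp add: rauzy_closed_def rauzy_t_swap rauzy_b_swap inj_image_mem_iff[OF inj_swap])
  qed
  moreover have "inj_on rauzy_t (prod.swap ` V)" "inj_on rauzy_b (prod.swap ` V)"
    using assms inj_on_swap_image rauzy_t_swap rauzy_b_swap by (auto simp: rauzy_closed_def)
  ultimately show ?thesis by (simp add: rauzy_closed_def)
qed

lemma hyp_class_rauzy_closed:
  assumes d: "distinct m" and "2 \<le> length m"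
  shows "rauzy_closed (hyp_class m)"
proof -
  have tau: "hyp_t m (tau_word m)" "hyp_b m (tau_word m)"
    using assms(2) by (simp_all add: hyp_t.tau)
  have "rauzy_t p \<in> hyp_class m \<and> rauzy_b p \<in> hyp_class m" if p: "p \<in> hyp_class m" for p
  proof (cases "p = tau_word m")
    case True
    then show ?thesis
      using hyp_t_closed[OF tau(1) d] hyp_b_closed[OF tau(2) d] by (simp add: hyp_class_def)
  next
    case False
    then show ?thesis
      using p hyp_t_closed[of m p] hyp_b_closed[of m p] d by (auto simp: hyp_class_def)
  qed
  moreover have shaped: "well_shaped m p" if "p \<in> hyp_class m" for p
    using that hyp_t_shape[OF _ d] hyp_b_shape[OF _ d] unfolding hyp_class_def by blast
  then have "hyp_class m \<subseteq> {p. last (fst p) \<in> set (butlast (snd p))}"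
    "hyp_class m \<subseteq> {p. last (snd p) \<in> set (butlast (fst p))}"
    using well_shaped_last_in_butlast by blast+
  then have "inj_on rauzy_t (hyp_class m)" "inj_on rauzy_b (hyp_class m)"
    using inj_on_subset[OF inj_on_rauzy_t] inj_on_subset[OF inj_on_rauzy_b] by blast+
  ultimately show ?thesis by (simp add: rauzy_closed_def)
qed

lemma vertices_in_hyp_class:
  assumes "distinct m" and "2 \<le> length m"
  shows "rauzy_vertices (tau_word m) \<subseteq> hyp_class m"
proof
  fix q assume "q \<in> rauzy_vertices (tau_word m)"
  then have "(\<lambda>x y. y = rauzy_t x \<or> y = rauzy_b x)\<^sup>*\<^sup>* (tau_word m) q"
    by (simp add: rauzy_vertices_def)
  then show "q \<in> hyp_class m"
  proof (induction rule: rtranclp_induct)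
    case base
    then show ?case using assms(2) by (simp add: hyp_class_def hyp_t.tau)
  next
    case (step y z)
    then show ?case using hyp_class_rauzy_closed[OF assms] by (auto simp: rauzy_closed_def)
  qed
qed

(* trap f g p: some set W contains f p but not p, is closed under g, and is closed under f
   except at f p.  A closed path entering W by the f-edge out of p can only leave W by the
   f-edge out of f p. *)
definition trap :: "('a \<Rightarrow> 'a) \<Rightarrow> ('a \<Rightarrow> 'a) \<Rightarrow> 'a \<Rightarrow> bool" where
  "trap f g p \<longleftrightarrow> (\<exists>W. f p \<in> W \<and> p \<notin> W \<and> (\<forall>x\<in>W. g x \<in> W \<and> (x \<noteq> f p \<longrightarrow> f x \<in> W)))"

abbreviation trap_t :: "'a lperm \<Rightarrow> bool" where
  "trap_t \<equiv> trap rauzy_t rauzy_b"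

abbreviation trap_b :: "'a lperm \<Rightarrow> bool" where
  "trap_b \<equiv> trap rauzy_b rauzy_t"

lemma trap_conjugate:
  assumes h: "inj h" and f: "\<And>x. f' (h x) = h (f x)" and g: "\<And>x. g' (h x) = h (g x)"
    and "trap f g p"
  shows "trap f' g' (h p)"
proof -
  obtain W where W: "f p \<in> W" "p \<notin> W" "\<And>x. x \<in> W \<Longrightarrow> g x \<in> W"
    "\<And>x. x \<in> W \<Longrightarrow> x \<noteq> f p \<Longrightarrow> f x \<in> W"
    using assms(4) unfolding trap_def by blast
  have "f' (h p) \<in> h ` W" unfolding f using W(1) by (rule imageI)
  moreover have "h p \<notin> h ` W" using W(2) by (simp add: inj_image_mem_iff[OF h])
  moreover have "g' y \<in> h ` W \<and> (y \<noteq> f' (h p) \<longrightarrow> f' y \<in> h ` W)" if y: "y \<in> h ` W" for y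
  proof -
    obtain x where x: "x \<in> W" and y_eq: "y = h x" using y by blast
    have "g' y = h (g x)" "f' y = h (f x)" "f' (h p) = h (f p)" unfolding y_eq by (simp_all only: f g)
    moreover have "g x \<in> W" using W(3)[OF x] .
    moreover have "y \<noteq> f' (h p) \<Longrightarrow> f x \<in> W"
      using W(4)[OF x] \<open>f' (h p) = h (f p)\<close> y_eq by (cases "x = f p") simp_all
    ultimately show ?thesis by blast
  qed
  ultimately show ?thesis unfolding trap_def by (intro exI[of _ "h ` W"]) blast
qed

lemma trap_t_swap [simp]: "trap_t (prod.swap p) \<longleftrightarrow> trap_b p"
proof
  assume "trap_t (prod.swap p)"
  then have "trap_b (prod.swap (prod.swap p))"
    by (rule trap_conjugate[where h = prod.swap and f' = rauzy_b and f = rauzy_t and g' = rauzy_t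
          and g = rauzy_b, OF inj_swap rauzy_b_swap rauzy_t_swap])
  then show "trap_b p" by simp
next
  assume "trap_b p"
  then show "trap_t (prod.swap p)"
    by (rule trap_conjugate[where h = prod.swap and f' = rauzy_t and f = rauzy_b and g' = rauzy_b
          and g = rauzy_t, OF inj_swap rauzy_t_swap rauzy_b_swap])
qed

lemma trap_b_swap [simp]: "trap_b (prod.swap p) \<longleftrightarrow> trap_t p"
  using trap_t_swap[of "prod.swap p"] by simp

(* embeds V Phi m: Phi maps the top-type vertices on m injectively into V and commutes with
   R_t, and with R_b except at tau.  It records how the class on a subword sits inside the
   whole diagram. *)
definition embeds :: "'a lperm set \<Rightarrow> ('a lperm \<Rightarrow> 'a lperm) \<Rightarrow> 'a list \<Rightarrow> bool" where
  "embeds V \<Phi> m \<longleftrightarrow> inj_on \<Phi> {p. hyp_t m p} \<and>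
     (\<forall>p. hyp_t m p \<longrightarrow> \<Phi> p \<in> V \<and> rauzy_t (\<Phi> p) = \<Phi> (rauzy_t p) \<and>
        (p \<noteq> tau_word m \<longrightarrow> rauzy_b (\<Phi> p) = \<Phi> (rauzy_b p)))"

lemma embedsD:
  assumes "embeds V \<Phi> m" and "hyp_t m p"
  shows "\<Phi> p \<in> V" and "rauzy_t (\<Phi> p) = \<Phi> (rauzy_t p)"
    and "p \<noteq> tau_word m \<Longrightarrow> rauzy_b (\<Phi> p) = \<Phi> (rauzy_b p)"
    and "hyp_t m q \<Longrightarrow> \<Phi> p = \<Phi> q \<Longrightarrow> p = q"
proof -
  show "\<Phi> p \<in> V" "rauzy_t (\<Phi> p) = \<Phi> (rauzy_t p)"
    "p \<noteq> tau_word m \<Longrightarrow> rauzy_b (\<Phi> p) = \<Phi> (rauzy_b p)"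
    using assms unfolding embeds_def by blast+
  have "inj_on \<Phi> {p. hyp_t m p}" using assms(1) unfolding embeds_def by simp
  then show "hyp_t m q \<Longrightarrow> \<Phi> p = \<Phi> q \<Longrightarrow> p = q"
    using assms(2) by (simp add: inj_on_eq_iff)
qed

lemma embeds_ext:
  assumes emb: "embeds V \<Phi> (F @ m)" and d: "distinct (F @ m)" and F: "F \<noteq> []"
  shows "embeds (prod.swap ` V) (prod.swap \<circ> \<Phi> \<circ> ext_top F \<circ> prod.swap) (rev m)"
proof -
  have vertex: "hyp_t (F @ m) (ext_top F p)" if "hyp_b m p" for p using that F by (rule hyp_t.ext)
  have nonempty: "snd p \<noteq> []" if "hyp_b m p" for p
    using hyp_b_shape[OF that] d by (auto simp: well_shaped_def)
  show ?thesis unfolding embeds_def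
  proof (intro conjI allI impI inj_onI)
    fix y z assume "y \<in> {p. hyp_t (rev m) p}" "z \<in> {p. hyp_t (rev m) p}"
      and "(prod.swap \<circ> \<Phi> \<circ> ext_top F \<circ> prod.swap) y = (prod.swap \<circ> \<Phi> \<circ> ext_top F \<circ> prod.swap) z"
    then have y: "hyp_b m (prod.swap y)" and z: "hyp_b m (prod.swap z)"
      and "\<Phi> (ext_top F (prod.swap y)) = \<Phi> (ext_top F (prod.swap z))" by auto
    then have "ext_top F (prod.swap y) = ext_top F (prod.swap z)"
      using embedsD(4)[OF emb vertex vertex] by blast
    then have "prod.swap y = prod.swap z" using ext_top_inj nonempty[OF y] nonempty[OF z] by blast
    then show "y = z" by simp
  next
    fix y assume y: "hyp_t (rev m) y"
    then have p: "hyp_b m (prod.swap y)" by simp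
    show "(prod.swap \<circ> \<Phi> \<circ> ext_top F \<circ> prod.swap) y \<in> prod.swap ` V"
      using embedsD(1)[OF emb vertex[OF p]] by simp
    show "rauzy_t ((prod.swap \<circ> \<Phi> \<circ> ext_top F \<circ> prod.swap) y) =
          (prod.swap \<circ> \<Phi> \<circ> ext_top F \<circ> prod.swap) (rauzy_t y)"
      using embedsD(3)[OF emb vertex[OF p] ext_top_ne_tau[OF p d F]] rauzy_b_ext_vertex[OF p d]
      by (simp add: rauzy_t_swap rauzy_b_swap[of y, symmetric])
    assume "y \<noteq> tau_word (rev m)"
    then have "prod.swap y \<noteq> tau_word m" by auto
    then show "rauzy_b ((prod.swap \<circ> \<Phi> \<circ> ext_top F \<circ> prod.swap) y) =
          (prod.swap \<circ> \<Phi> \<circ> ext_top F \<circ> prod.swap) (rauzy_b y)"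
      using embedsD(2)[OF emb vertex[OF p]] rauzy_t_ext_vertex[OF p d]
      by (simp add: rauzy_b_swap rauzy_t_swap[of y, symmetric])
  qed
qed

(* The block is the trap: its only exit is the
   R_t-edge at the image of the extended tau(m). *)
lemma trap_at_exit:
  assumes emb: "embeds V \<Phi> (G @ m)" and d: "distinct (G @ m)" and G: "G \<noteq> []"
    and len: "2 \<le> length m" and \<pi>: "hyp_t (G @ m) \<pi>"
    and enters: "rauzy_t \<pi> = ext_top G (tau_word m)"
    and outside: "\<pi> \<notin> ext_top G ` {p. hyp_b m p}"
  shows "trap_t (\<Phi> \<pi>)"
proof -
  define W where "W = \<Phi> ` ext_top G ` {p. hyp_b m p}"
  have dm: "distinct m" using d by simp
  have vertex: "hyp_t (G @ m) (ext_top G p)" if "hyp_b m p" for p using that G by (rule hyp_t.ext)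
  have inW: "\<Phi> (ext_top G p) \<in> W" if "hyp_b m p" for p using that unfolding W_def by blast
  have entry: "rauzy_t (\<Phi> \<pi>) = \<Phi> (ext_top G (tau_word m))"
    using embedsD(2)[OF emb \<pi>] enters by simp
  have "rauzy_t (\<Phi> \<pi>) \<in> W" unfolding entry using inW[OF hyp_b_tau[OF len]] .
  moreover have "\<Phi> \<pi> \<notin> W"
  proof
    assume "\<Phi> \<pi> \<in> W"
    then obtain p where p: "hyp_b m p" "\<Phi> \<pi> = \<Phi> (ext_top G p)" unfolding W_def by blast
    then have "\<pi> = ext_top G p" using embedsD(4)[OF emb \<pi> vertex[OF p(1)]] by blast
    then show False using outside p(1) by blast
  qed
  moreover have "rauzy_b x \<in> W \<and> (x \<noteq> rauzy_t (\<Phi> \<pi>) \<longrightarrow> rauzy_t x \<in> W)" if x: "x \<in> W" for x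
  proof -
    obtain p where p: "hyp_b m p" and x_eq: "x = \<Phi> (ext_top G p)" using x unfolding W_def by blast
    have "rauzy_b x = \<Phi> (ext_top G (rauzy_b p))"
      using embedsD(3)[OF emb vertex[OF p] ext_top_ne_tau[OF p d G]] rauzy_b_ext_vertex[OF p d] x_eq
      by simp
    then have "rauzy_b x \<in> W" using inW hyp_b_closed[OF p dm] by simp
    moreover have "rauzy_t x \<in> W" if moved: "x \<noteq> rauzy_t (\<Phi> \<pi>)"
    proof -
      have ne: "p \<noteq> tau_word m" using moved x_eq entry by auto
      have "rauzy_t x = \<Phi> (ext_top G (rauzy_t p))"
        using embedsD(2)[OF emb vertex[OF p]] rauzy_t_ext_vertex[OF p d ne] x_eq by simp
      then show ?thesis using inW hyp_b_closed[OF p dm] ne by simp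
    qed
    ultimately show ?thesis by blast
  qed
  ultimately show ?thesis unfolding trap_def by (intro exI[of _ W]) blast
qed

(* The trap is everything in V except the images
   of top-type vertices other than tau; injectivity of the moves and the existence of
   predecessors show that it can only be left through the R_t-edge at the image of tau(m). *)
lemma trap_at_entry:
  assumes V: "rauzy_closed V" and emb: "embeds V \<Phi> m" and d: "distinct m"
    and \<pi>: "hyp_t m \<pi>" "\<pi> \<noteq> tau_word m" and enters: "rauzy_t \<pi> = tau_word m"
  shows "trap_t (\<Phi> \<pi>)"
proof -
  define U where "U = \<Phi> ` {p. hyp_t m p \<and> p \<noteq> tau_word m}"
  define W where "W = V - U"
  have tau: "hyp_t m (tau_word m)" using hyp_t.tau[OF hyp_t_length[OF \<pi>(1)]] .
  have inj_t: "inj_on rauzy_t V" and inj_b: "inj_on rauzy_b V"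
    and closed: "\<And>x. x \<in> V \<Longrightarrow> rauzy_t x \<in> V" "\<And>x. x \<in> V \<Longrightarrow> rauzy_b x \<in> V"
    using V unfolding rauzy_closed_def by blast+
  have entry: "rauzy_t (\<Phi> \<pi>) = \<Phi> (tau_word m)" using embedsD(2)[OF emb \<pi>(1)] enters by simp
  have "\<Phi> (tau_word m) \<notin> U"
  proof
    assume "\<Phi> (tau_word m) \<in> U"
    then obtain p where "hyp_t m p" "p \<noteq> tau_word m" "\<Phi> (tau_word m) = \<Phi> p" unfolding U_def by blast
    then show False using embedsD(4)[OF emb tau] by blast
  qed
  then have "rauzy_t (\<Phi> \<pi>) \<in> W" unfolding W_def entry using embedsD(1)[OF emb tau] by blast
  moreover have "\<Phi> \<pi> \<notin> W" unfolding W_def U_def using \<pi> by blast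
  moreover have "rauzy_b x \<in> W \<and> (x \<noteq> rauzy_t (\<Phi> \<pi>) \<longrightarrow> rauzy_t x \<in> W)" if x: "x \<in> W" for x
  proof -
    have xV: "x \<in> V" and xU: "x \<notin> U" using x unfolding W_def by auto
    have "rauzy_b x \<notin> U"
    proof
      assume "rauzy_b x \<in> U"
      then obtain y where y: "hyp_t m y" "y \<noteq> tau_word m" "rauzy_b x = \<Phi> y" unfolding U_def by blast
      obtain z where z: "hyp_t m z" "z \<noteq> tau_word m" "rauzy_b z = y"
        using hyp_t_preds[OF y(1) d] y(2) by blast
      have "rauzy_b (\<Phi> z) = rauzy_b x" using embedsD(3)[OF emb z(1,2)] z(3) y(3) by simp
      then have "\<Phi> z = x" using inj_onD[OF inj_b] embedsD(1)[OF emb z(1)] xV by blast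
      then show False using xU z(1,2) unfolding U_def by blast
    qed
    moreover have "rauzy_t x \<notin> U" if moved: "x \<noteq> rauzy_t (\<Phi> \<pi>)"
    proof
      assume "rauzy_t x \<in> U"
      then obtain y where y: "hyp_t m y" "y \<noteq> tau_word m" "rauzy_t x = \<Phi> y" unfolding U_def by blast
      obtain z where z: "hyp_t m z" "rauzy_t z = y" using hyp_t_preds[OF y(1) d] by blast
      have "rauzy_t (\<Phi> z) = rauzy_t x" using embedsD(2)[OF emb z(1)] z(2) y(3) by simp
      then have "\<Phi> z = x" using inj_onD[OF inj_t] embedsD(1)[OF emb z(1)] xV by blast
      moreover have "z \<noteq> tau_word m" using \<open>\<Phi> z = x\<close> moved entry by auto
      ultimately show False using xU z(1) unfolding U_def by blast
    qed
    ultimately show ?thesis using closed xV unfolding W_def by blast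
  qed
  ultimately show ?thesis unfolding trap_def by (intro exI[of _ W]) blast
qed

lemma trap_at_ext_tau:
  assumes V: "rauzy_closed V" and emb: "embeds V \<Phi> (F @ m)" and d: "distinct (F @ m)"
    and len: "2 \<le> length m"
    and moves: "rauzy_t (ext_top F (tau_word m)) \<noteq> ext_top F (tau_word m)"
  shows "trap_t (\<Phi> (ext_top F (tau_word m)))"
proof -
  obtain h m' where m: "m = h # m'" "m' \<noteq> []" using len by (cases m) (auto simp: Suc_le_eq)
  have "2 \<le> length (F @ m)" "m \<noteq> []" using len by auto
  then have \<pi>: "hyp_t (F @ m) (ext_top F (tau_word m))" by (rule hyp_t_ext_tau)
  have step: "rauzy_t (ext_top F (tau_word m)) = ext_top (F @ [h]) (tau_word m')"
    using rauzy_t_ext_tau[OF m(2)] m(1) by simp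
  show ?thesis
  proof (cases "2 \<le> length m'")
    case True
    have "ext_top F (tau_word m) \<notin> ext_top (F @ [h]) ` {p. hyp_b m' p}"
      using ext_tau_not_ext[of F h m'] d m True by auto
    then show ?thesis using trap_at_exit[of V \<Phi> "F @ [h]" m'] emb d \<pi> step True m(1) by simp
  next
    case False
    then obtain l where "m' = [l]" using m(2) by (cases m') (auto simp: Suc_le_eq)
    then have "rauzy_t (ext_top F (tau_word m)) = tau_word (F @ m)"
      using step m(1) by (simp add: ext_top_tau_singleton)
    moreover have "ext_top F (tau_word m) \<noteq> tau_word (F @ m)" using moves calculation by auto
    ultimately show ?thesis using trap_at_entry[OF V emb d \<pi>] by blast
  qed
qed

(* Extensions of non-tau vertices inherit
   the traps of their bottom-type origin through embeds_ext and mirroring. *)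
lemma hyp_t_traps:
  "hyp_t m p \<Longrightarrow> distinct m \<Longrightarrow> rauzy_closed V \<Longrightarrow> embeds V \<Phi> m \<Longrightarrow>
   (rauzy_t p \<noteq> p \<longrightarrow> trap_t (\<Phi> p)) \<and> (p \<noteq> tau_word m \<longrightarrow> rauzy_b p \<noteq> p \<longrightarrow> trap_b (\<Phi> p))"
proof (induction arbitrary: V \<Phi> rule: hyp_t.induct)
  case (tau m)
  have tau_eq: "ext_top [] (tau_word m) = tau_word m" using tau.hyps
    by (intro ext_top_Nil) (auto simp: tau_word_def)
  show ?case using trap_at_ext_tau[of V \<Phi> "[]" m] tau.prems tau.hyps unfolding tau_eq by simp
next
  case (ext m p F)
  have d: "distinct (F @ m)" by fact
  have IH: "(rauzy_b p \<noteq> p \<longrightarrow> trap_b (\<Phi> (ext_top F p))) \<and>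
      (p \<noteq> tau_word m \<longrightarrow> rauzy_t p \<noteq> p \<longrightarrow> trap_t (\<Phi> (ext_top F p)))"
    using ext.IH[of "prod.swap ` V" "prod.swap \<circ> \<Phi> \<circ> ext_top F \<circ> prod.swap"] d
      embeds_ext[OF ext.prems(3) d ext.hyps(2)] rauzy_closed_swap[OF ext.prems(2)]
    by (simp add: rauzy_t_swap rauzy_b_swap comp_def)
  show ?case
  proof (intro conjI impI)
    assume moves: "rauzy_t (ext_top F p) \<noteq> ext_top F p"
    show "trap_t (\<Phi> (ext_top F p))"
    proof (cases "p = tau_word m")
      case True
      then show ?thesis
        using trap_at_ext_tau[OF ext.prems(2,3) d] hyp_t_length[OF ext.hyps(1)] moves by simp
    next
      case False
      then have "rauzy_t p \<noteq> p" using moves rauzy_t_ext_vertex[OF ext.hyps(1) d False] by auto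
      then show ?thesis using IH False by simp
    qed
  next
    assume "rauzy_b (ext_top F p) \<noteq> ext_top F p"
    then have "rauzy_b p \<noteq> p" using rauzy_b_ext_vertex[OF ext.hyps(1) d] by auto
    then show "trap_b (\<Phi> (ext_top F p))" using IH by simp
  qed
qed

lemma embeds_id: "embeds (hyp_class m) id m"
  unfolding embeds_def hyp_class_def by simp

lemma hyp_class_traps:
  assumes d: "distinct m" and len: "2 \<le> length m" and p: "p \<in> hyp_class m"
  shows "(rauzy_t p \<noteq> p \<longrightarrow> trap_t p) \<and> (rauzy_b p \<noteq> p \<longrightarrow> trap_b p)"
proof -
  have top: "(rauzy_t q \<noteq> q \<longrightarrow> trap_t q) \<and> (q \<noteq> tau_word m \<longrightarrow> rauzy_b q \<noteq> q \<longrightarrow> trap_b q)"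
    if "hyp_t m q" for q
    using hyp_t_traps[OF that d hyp_class_rauzy_closed[OF d len] embeds_id] by simp
  have bot: "(rauzy_b q \<noteq> q \<longrightarrow> trap_b q) \<and> (q \<noteq> tau_word m \<longrightarrow> rauzy_t q \<noteq> q \<longrightarrow> trap_t q)"
    if "hyp_b m q" for q
    using hyp_t_traps[OF that _ hyp_class_rauzy_closed embeds_id] d len
    by (simp add: rauzy_t_swap rauzy_b_swap)
  show ?thesis
  proof (cases "p = tau_word m")
    case True
    then show ?thesis using top[OF hyp_t.tau[OF len]] bot[OF hyp_b_tau[OF len]] by simp
  next
    case False
    then show ?thesis using p top[of p] bot[of p] by (auto simp: hyp_class_def)
  qed
qed

lemma closed_path_next:
  assumes "closed_path p0 \<gamma>" and "j < length \<gamma>"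
  shows "snd (snd (snd (\<gamma> ! j))) = fst (\<gamma> ! (Suc j mod length \<gamma>))"
proof (cases "Suc j < length \<gamma>")
  case True
  then show ?thesis using assms(1) by (simp add: closed_path_def)
next
  case False
  then have "Suc j = length \<gamma>" using assms(2) by simp
  then have "j = length \<gamma> - 1" "Suc j mod length \<gamma> = 0" "\<gamma> \<noteq> []" by auto
  then show ?thesis using assms(1) by (simp add: closed_path_def last_conv_nth hd_conv_nth)
qed

lemma closed_path_leaves:
  assumes cp: "closed_path p0 \<gamma>" and e: "e \<in> set \<gamma>"
    and enters: "snd (snd (snd e)) \<in> W" and outside: "fst e \<notin> W"
  shows "\<exists>e'\<in>set \<gamma>. fst e' \<in> W \<and> snd (snd (snd e')) \<notin> W"
proof (rule ccontr)
  assume "\<not> ?thesis"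
  then have stays: "\<And>e'. e' \<in> set \<gamma> \<Longrightarrow> fst e' \<in> W \<Longrightarrow> snd (snd (snd e')) \<in> W" by blast
  define N where "N = length \<gamma>"
  obtain k where k: "k < N" "\<gamma> ! k = e" using e unfolding N_def by (metis in_set_conv_nth)
  have "fst (\<gamma> ! ((k + Suc i) mod N)) \<in> W" for i
  proof (induction i)
    case 0
    show ?case using closed_path_next[OF cp k(1)[unfolded N_def]] k enters by (simp add: N_def)
  next
    case (Suc i)
    have j: "(k + Suc i) mod N < N" using k(1) by simp
    then have "snd (snd (snd (\<gamma> ! ((k + Suc i) mod N)))) \<in> W"
      using stays[OF nth_mem[OF j[unfolded N_def]]] Suc.IH by (simp add: N_def)
    then show ?case using closed_path_next[OF cp j[unfolded N_def]] by (simp add: N_def mod_Suc_eq)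
  qed
  from this[of "N - 1"] have "fst e \<in> W" using k by simp
  then show False using outside by simp
qed

lemma trap_exit_edge:
  assumes cp: "closed_path p0 \<gamma>" and e: "(\<pi>, \<alpha>, \<beta>, f \<pi>) \<in> set \<gamma>" and trap: "trap f g \<pi>"
    and edges: "\<And>x a b y. (x, a, b, y) \<in> set \<gamma> \<Longrightarrow> y \<noteq> g x \<Longrightarrow> y = f x \<and> a = w x"
  shows "\<exists>b y. (f \<pi>, w (f \<pi>), b, y) \<in> set \<gamma>"
proof -
  obtain W where W: "f \<pi> \<in> W" "\<pi> \<notin> W" "\<And>x. x \<in> W \<Longrightarrow> g x \<in> W"
    "\<And>x. x \<in> W \<Longrightarrow> x \<noteq> f \<pi> \<Longrightarrow> f x \<in> W"
    using trap unfolding trap_def by blast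
  obtain e' where "e' \<in> set \<gamma>" "fst e' \<in> W" "snd (snd (snd e')) \<notin> W"
    using closed_path_leaves[OF cp e, of W] W(1,2) by auto
  moreover obtain x a b y where "e' = (x, a, b, y)" by (cases e')
  ultimately have e': "(x, a, b, y) \<in> set \<gamma>" "x \<in> W" "y \<notin> W" by simp_all
  then have "y \<noteq> g x" using W(3) by blast
  then have "y = f x" "a = w x" using edges[OF e'(1)] by auto
  then have "x = f \<pi>" using W(4) e'(2,3) by blast
  then show ?thesis using e'(1) \<open>a = w x\<close> by blast
qed

theorem corollary3p1:
  fixes n :: nat and \<gamma> :: "(nat lperm \<times> nat \<times> nat \<times> nat lperm) list"
    and \<pi> \<pi>' :: "nat lperm" and \<alpha> \<beta> :: nat
  assumes "n \<ge> 2"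
    and "closed_path (tau n) \<gamma>"
    and "(\<pi>, \<alpha>, \<beta>, \<pi>') \<in> set \<gamma>"
    and "\<pi> \<noteq> \<pi>'"
  shows "\<exists>\<beta>' \<pi>''. (\<pi>', \<alpha>, \<beta>', \<pi>'') \<in> set \<gamma>"
proof -
  define m :: "nat list" where "m = 0 # [2..<n+1]"
  have m: "distinct m" "2 \<le> length m" "tau n = tau_word m"
    using assms(1) by (auto simp: m_def tau_def tau_word_def)
  have edges: "\<And>x a b y. (x, a, b, y) \<in> set \<gamma> \<Longrightarrow> rauzy_edge x a b y"
    and "\<pi> \<in> rauzy_vertices (tau n)"
    using assms(2,3) by (auto simp: closed_path_def rauzy_diagram_edges_def)
  then have "\<pi> \<in> hyp_class m" using vertices_in_hyp_class[OF m(1,2)] m(3) by auto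
  then have traps: "rauzy_t \<pi> \<noteq> \<pi> \<Longrightarrow> trap_t \<pi>" "rauzy_b \<pi> \<noteq> \<pi> \<Longrightarrow> trap_b \<pi>"
    using hyp_class_traps[OF m(1,2)] by blast+
  from edges[OF assms(3)]
  consider "\<pi>' = rauzy_t \<pi>" "\<alpha> = last (fst \<pi>)" | "\<pi>' = rauzy_b \<pi>" "\<alpha> = last (snd \<pi>)"
    unfolding rauzy_edge_def by blast
  then show ?thesis
  proof cases
    case 1
    have t_edges: "y = rauzy_t x \<and> a = last (fst x)"
      if "(x, a, b, y) \<in> set \<gamma>" "y \<noteq> rauzy_b x" for x a b y
      using edges[OF that(1)] that(2) unfolding rauzy_edge_def by auto
    have "(\<pi>, \<alpha>, \<beta>, rauzy_t \<pi>) \<in> set \<gamma>" "rauzy_t \<pi> \<noteq> \<pi>" using assms(3,4) 1 by auto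
    then have "\<exists>b y. (rauzy_t \<pi>, last (fst (rauzy_t \<pi>)), b, y) \<in> set \<gamma>"
      using trap_exit_edge[where w = "\<lambda>x. last (fst x)", OF assms(2) _ traps(1) t_edges] by simp
    then show ?thesis using 1 by (simp add: fst_rauzy_t)
  next
    case 2
    have b_edges: "y = rauzy_b x \<and> a = last (snd x)"
      if "(x, a, b, y) \<in> set \<gamma>" "y \<noteq> rauzy_t x" for x a b y
      using edges[OF that(1)] that(2) unfolding rauzy_edge_def by auto
    have "(\<pi>, \<alpha>, \<beta>, rauzy_b \<pi>) \<in> set \<gamma>" "rauzy_b \<pi> \<noteq> \<pi>" using assms(3,4) 2 by auto
    then have "\<exists>b y. (rauzy_b \<pi>, last (snd (rauzy_b \<pi>)), b, y) \<in> set \<gamma>"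
      using trap_exit_edge[where w = "\<lambda>x. last (snd x)", OF assms(2) _ traps(2) b_edges] by simp
    then show ?thesis using 2 by (simp add: snd_rauzy_b)
  qed
qed

end
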